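(* Consider on $\mathcal D=[0,+\infty)^3$ the system $$\dot E=\beta_E F\Big(1-\frac{E}{K}\Big)-(\nu_E+\delta_E)E,\qquad \dot M=(1-\nu)\nu_E E-\delta_M M,\qquad \dot F=\nu\nu_E E-\delta_F F ,$$ and assume $\mathcal R_0>1$. Then the system has exactly two equilibria in $\mathcal D$, namely $\mathbf 0$ and $x^*=(E^*,M^*,F^* )^T$ with $$E^*=K\Big(1-\frac1{\mathcal R_0}\Big),\quad M^*=\frac{(1-\nu)\nu_E}{\delta_M}E^*,\quad F^*=\frac{\nu\nu_E}{\delta_F}E^*.$$ Moreover, $x^*$ is stable in $\mathcal D$ and its basin of attraction is $\mathcal D\setminus\{(E,M,F)^T\in[0,+\infty)^3: E=F=0\}$ (i.e. every solution with initial condition in $\mathcal D$ and $(E(0),F(0))\neq(0,0)$ converges to $x^*$), while $\mathbf 0$ is unstable in $\mathcal D$ and the nonnegative $M$-axis $\{E=F=0,\ M\ge0\}$ is a stable manifold of $\mathbf 0$ (solutions starting on it converge to $\mathbf 0$).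
   Context: Parameters: $\beta_E,\nu_E,\delta_E,\delta_M,\delta_F,K>0$ and $\nu\in(0,1)$. $\mathcal R_0:=\dfrac{\beta_E\nu\nu_E}{\delta_F(\nu_E+\delta_E)}$. An equilibrium $x_e\in\mathcal D$ is stable in $\mathcal D$ if for every $\varepsilon>0$ there is $\delta>0$ such that every solution with $x(0)\in\mathcal D$, $\|x(0)-x_e\|<\delta$ satisfies $\|x(t)-x_e\|<\varepsilon$ for all $t>0$; it is unstable in $\mathcal D$ if it is not stable in $\mathcal D$. *)

theory Defs
  imports "HOL-Analysis.Analysis"
begin

text \<open>States are triples (E, M, F) :: real \<times> real \<times> real; the product norm on this
type is the Euclidean norm.\<close>

type_synonym state = "real \<times> real \<times> real"

definition mosq_vf ::
  "real \<Rightarrow> real \<Rightarrow> real \<Rightarrow> real \<Rightarrow> real \<Rightarrow> real \<Rightarrow> real \<Rightarrow> state \<Rightarrow> state" where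
  "mosq_vf \<beta>E \<nu>E \<delta>E \<delta>M \<delta>F K \<nu> x =
     (case x of (E, M, F) \<Rightarrow>
       (\<beta>E * F * (1 - E / K) - (\<nu>E + \<delta>E) * E,
        (1 - \<nu>) * \<nu>E * E - \<delta>M * M,
        \<nu> * \<nu>E * E - \<delta>F * F))"

definition R0 :: "real \<Rightarrow> real \<Rightarrow> real \<Rightarrow> real \<Rightarrow> real \<Rightarrow> real" where
  "R0 \<beta>E \<nu>E \<delta>E \<delta>F \<nu> = (\<beta>E * \<nu> * \<nu>E) / (\<delta>F * (\<nu>E + \<delta>E))"

definition domD :: "state set" where
  "domD = {(E, M, F). E \<ge> 0 \<and> M \<ge> 0 \<and> F \<ge> 0}"

definition is_solution :: "(state \<Rightarrow> state) \<Rightarrow> (real \<Rightarrow> state) \<Rightarrow> bool" where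
  "is_solution f x \<longleftrightarrow>
     (\<forall>t\<ge>0. (x has_vector_derivative f (x t)) (at t within {0..}))"

definition is_equilibrium :: "(state \<Rightarrow> state) \<Rightarrow> state set \<Rightarrow> state \<Rightarrow> bool" where
  "is_equilibrium f S xe \<longleftrightarrow> xe \<in> S \<and> f xe = 0"

definition stable_in :: "(state \<Rightarrow> state) \<Rightarrow> state set \<Rightarrow> state \<Rightarrow> bool" where
  "stable_in f S xe \<longleftrightarrow>
     (\<forall>\<epsilon>>0. \<exists>\<delta>>0. \<forall>x. is_solution f x \<and> x 0 \<in> S \<and> dist (x 0) xe < \<delta> \<longrightarrow>
        (\<forall>t>0. dist (x t) xe < \<epsilon>))"

end

theory Submission
  imports Defs
begin

text \<open>The nonnegative orthant is forward invariant: the squared negative parts of \<open>E\<close> and \<open>F\<close>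
  satisfy a Gronwall inequality. On the \<open>M\<close>-axis \<open>E = F = 0\<close> persists and \<open>M\<close> decays.
  For \<open>R0 > 1\<close> the function \<open>V = (E - E\<^sup>*)\<^sup>2 + \<lambda> (F - F\<^sup>*)\<^sup>2\<close>, with
  \<open>\<lambda> = \<delta>F (\<nu>E + \<delta>E) / (\<nu> \<nu>E)\<^sup>2\<close>, has derivative \<open>-2 W\<close> along solutions, where \<open>W\<close> is a sum of
  nonnegative terms vanishing in the quadrant only at \<open>(0, 0)\<close> and \<open>(E\<^sup>*, F\<^sup>*)\<close>. This gives
  stability of \<open>x\<^sup>*\<close>. If \<open>(E(0), F(0)) \<noteq> (0, 0)\<close>, some combination \<open>E + s F\<close> stays bounded away
  from 0, so \<open>W\<close> is bounded below as long as \<open>V\<close> is, which forces \<open>V \<rightarrow> 0\<close>; \<open>M\<close> then follows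
  \<open>E\<close> as a linear relaxation. Finally \<open>0\<close> is unstable because solutions starting at \<open>(e, 0, 0)\<close>,
  \<open>e > 0\<close> small, converge to \<open>x\<^sup>*\<close>; their existence comes from a Picard iteration for the
  vector field clamped to a forward-invariant box.\<close>

section \<open>Scalar differential inequalities on \<open>[0, \<infinity>)\<close>\<close>

lemma halfline_mvt:
  fixes y y' :: "real \<Rightarrow> real"
  assumes deriv: "\<And>t. t \<ge> 0 \<Longrightarrow> (y has_real_derivative y' t) (at t within {0..})"
    and "0 \<le> a" "a < b"
  obtains \<xi> where "a < \<xi>" "\<xi> < b" "y b - y a = (b - a) * y' \<xi>"
proof -
  have "(y has_derivative (\<lambda>h. y' t * h)) (at t within {a..b})" if "a \<le> t" "t \<le> b" for t
    using deriv[of t] that assms(2) unfolding has_field_derivative_def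
    by (auto intro: has_derivative_subset)
  then obtain \<xi> where "\<xi> \<in> {a<..<b}" "y b - y a = y' \<xi> * (b - a)"
    using mvt_simple[OF assms(3), of y "\<lambda>t h. y' t * h"] by blast
  then show thesis by (intro that) auto
qed

lemma halfline_barrier_lower:
  fixes y y' :: "real \<Rightarrow> real"
  assumes deriv: "\<And>t. t \<ge> 0 \<Longrightarrow> (y has_real_derivative y' t) (at t within {0..})"
    and "0 \<le> t0" "B \<le> y t0"
    and push: "\<And>s. t0 \<le> s \<Longrightarrow> s \<le> t \<Longrightarrow> y s < B \<Longrightarrow> 0 \<le> y' s"
    and "t0 \<le> t"
  shows "B \<le> y t"
proof (rule ccontr)
  assume "\<not> B \<le> y t"
  define S where "S = {s \<in> {t0..t}. B \<le> y s}"
  have "continuous_on {t0..t} y"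
    using DERIV_continuous_on[OF deriv] \<open>0 \<le> t0\<close> by (auto intro: continuous_on_subset)
  then have "closed S"
    unfolding S_def by (intro continuous_on_closed_Collect_le) auto
  moreover have "t0 \<in> S" "bdd_above S"
    using assms by (auto simp: S_def intro: bdd_aboveI[of _ t])
  ultimately have "Sup S \<in> S"
    by (intro closed_contains_Sup) auto
  then have s: "t0 \<le> Sup S" "Sup S < t" "B \<le> y (Sup S)"
    using \<open>\<not> B \<le> y t\<close> by (auto simp: S_def order.order_iff_strict)
  have below: "y r < B" if "Sup S < r" "r \<le> t" for r
    using cSup_upper[OF _ \<open>bdd_above S\<close>, of r] that s by (force simp: S_def)
  obtain \<xi> where \<xi>: "Sup S < \<xi>" "\<xi> < t" "y t - y (Sup S) = (t - Sup S) * y' \<xi>"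
    using halfline_mvt[OF deriv _ s(2)] s(1) \<open>0 \<le> t0\<close> by (metis order.trans)
  have "0 \<le> y' \<xi>"
    using push[of \<xi>] below[of \<xi>] \<xi> s by auto
  then have "0 \<le> (t - Sup S) * y' \<xi>"
    using \<xi> by simp
  then show False
    using \<xi>(3) s(3) \<open>\<not> B \<le> y t\<close> by linarith
qed

lemma halfline_barrier_upper:
  fixes y y' :: "real \<Rightarrow> real"
  assumes deriv: "\<And>t. t \<ge> 0 \<Longrightarrow> (y has_real_derivative y' t) (at t within {0..})"
    and "0 \<le> t0" "y t0 \<le> B"
    and push: "\<And>s. t0 \<le> s \<Longrightarrow> s \<le> t \<Longrightarrow> B < y s \<Longrightarrow> y' s \<le> 0"
    and "t0 \<le> t"
  shows "y t \<le> B"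
  using halfline_barrier_lower[where y = "\<lambda>t. - y t" and y' = "\<lambda>t. - y' t" and B = "- B"]
    DERIV_minus[OF deriv] assms(2-5) by force

lemma halfline_antimono:
  fixes y y' :: "real \<Rightarrow> real"
  assumes deriv: "\<And>t. t \<ge> 0 \<Longrightarrow> (y has_real_derivative y' t) (at t within {0..})"
    and nonpos: "\<And>r. s \<le> r \<Longrightarrow> r \<le> t \<Longrightarrow> y' r \<le> 0"
    and "0 \<le> s" "s \<le> t"
  shows "y t \<le> y s"
  by (rule halfline_barrier_upper[OF deriv, of s]) (use assms in auto)

lemma halfline_gronwall_zero:
  fixes n n' :: "real \<Rightarrow> real"
  assumes deriv: "\<And>t. t \<ge> 0 \<Longrightarrow> (n has_real_derivative n' t) (at t within {0..})"
    and "n 0 = 0" and nonneg: "\<And>s. 0 \<le> s \<Longrightarrow> s \<le> t \<Longrightarrow> 0 \<le> n s"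
    and growth: "\<And>s. 0 \<le> s \<Longrightarrow> s \<le> t \<Longrightarrow> n' s \<le> C * n s"
    and "0 \<le> t"
  shows "n t = 0"
proof -
  \<comment> \<open>The weighted function \<open>exp (- C s) n s\<close> is nonincreasing and vanishes at 0.\<close>
  define m where "m s = exp (- C * s) * n s" for s
  have "(m has_real_derivative exp (- C * s) * (n' s - C * n s)) (at s within {0..})" if "0 \<le> s" for s
    unfolding m_def using deriv[OF that]
    by (auto intro!: derivative_eq_intros simp: algebra_simps)
  then have "m t \<le> m 0"
    by (rule halfline_antimono[of _ _ 0 t, OF _ _ order_refl \<open>0 \<le> t\<close>])
       (use growth in \<open>auto simp: mult_nonneg_nonpos\<close>)
  then have "n t \<le> 0"
    using \<open>n 0 = 0\<close> by (simp add: m_def mult_le_0_iff)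
  then show ?thesis
    using nonneg[of t] \<open>0 \<le> t\<close> by simp
qed

lemma halfline_eventually_le:
  fixes y y' :: "real \<Rightarrow> real"
  assumes deriv: "\<And>t. t \<ge> 0 \<Longrightarrow> (y has_real_derivative y' t) (at t within {0..})"
    and "0 < \<kappa>" and push: "\<forall>\<^sub>F t in at_top. B < y t \<longrightarrow> y' t \<le> - \<kappa>"
  shows "\<forall>\<^sub>F t in at_top. y t \<le> B"
proof -
  obtain T where "0 \<le> T" and T: "\<And>t. T \<le> t \<Longrightarrow> B < y t \<Longrightarrow> y' t \<le> - \<kappa>"
    using push unfolding eventually_at_top_linorder by (metis max.cobounded1 max.cobounded2 order.trans)
  \<comment> \<open>Above \<open>B\<close> the function decreases at rate \<open>\<kappa>\<close>, so it gets below \<open>B\<close> within time \<open>D\<close>.\<close>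
  define D where "D = \<bar>y T - B\<bar> / \<kappa> + 1"
  have "0 < D"
    using \<open>0 < \<kappa>\<close> by (simp add: D_def add_nonneg_pos)
  have "\<exists>t1\<in>{T..T + D}. y t1 \<le> B"
  proof (rule ccontr)
    assume "\<not> ?thesis"
    then have above: "\<And>t. T \<le> t \<Longrightarrow> t \<le> T + D \<Longrightarrow> B < y t"
      by force
    obtain \<xi> where \<xi>: "T < \<xi>" "\<xi> < T + D" "y (T + D) - y T = (T + D - T) * y' \<xi>"
      using halfline_mvt[OF deriv \<open>0 \<le> T\<close>, of "T + D"] \<open>0 < D\<close> by auto
    have "D * y' \<xi> \<le> D * - \<kappa>"
      using T[of \<xi>] above[of \<xi>] \<xi> \<open>0 < D\<close> by (intro mult_left_mono) auto
    moreover have "D * \<kappa> = \<bar>y T - B\<bar> + \<kappa>"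
      using \<open>0 < \<kappa>\<close> by (simp add: D_def field_simps)
    ultimately have "y (T + D) < B"
      using \<xi>(3) \<open>0 < \<kappa>\<close> by (simp add: abs_if split: if_splits)
    then show False
      using above[of "T + D"] \<open>0 < D\<close> by simp
  qed
  then obtain t1 where "T \<le> t1" "y t1 \<le> B"
    by auto
  have "y t \<le> B" if "t1 \<le> t" for t
  proof (rule halfline_barrier_upper[OF deriv _ \<open>y t1 \<le> B\<close> _ that])
    show "0 \<le> t1"
      using \<open>0 \<le> T\<close> \<open>T \<le> t1\<close> by simp
    show "y' s \<le> 0" if "t1 \<le> s" "B < y s" for s
      using T[of s] that \<open>T \<le> t1\<close> \<open>0 < \<kappa>\<close> by simp
  qed
  then show ?thesis
    unfolding eventually_at_top_linorder by blast
qed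

lemma halfline_invariant_interval:
  fixes y y' :: "real \<Rightarrow> real"
  assumes deriv: "\<And>t. t \<ge> 0 \<Longrightarrow> (y has_real_derivative y' t) (at t within {0..})"
    and "lo \<le> y 0" "y 0 \<le> hi"
    and "\<And>s. 0 \<le> s \<Longrightarrow> y s < lo \<Longrightarrow> 0 \<le> y' s"
    and "\<And>s. 0 \<le> s \<Longrightarrow> hi < y s \<Longrightarrow> y' s \<le> 0"
    and "0 \<le> t"
  shows "lo \<le> y t \<and> y t \<le> hi"
  using halfline_barrier_lower[OF deriv order_refl, of lo t]
    halfline_barrier_upper[OF deriv order_refl, of hi t] assms(2-6) by auto

lemma clamped_linear_invariant_interval:
  fixes y e :: "real \<Rightarrow> real"
  assumes deriv: "\<And>t. t \<ge> 0 \<Longrightarrow>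
      (y has_real_derivative b * e t - d * min c (max 0 (y t))) (at t within {0..})"
    and "0 \<le> b" "0 \<le> d" "\<And>t. 0 \<le> e t" "\<And>t. e t \<le> c1" "b * c1 \<le> d * c"
    and "0 \<le> y 0" "y 0 \<le> c" "0 \<le> t"
  shows "0 \<le> y t \<and> y t \<le> c"
proof (rule halfline_invariant_interval[OF deriv])
  show "0 \<le> b * e s - d * min c (max 0 (y s))" if "y s < 0" for s
    using that assms(2,4,7,8) by simp
  show "b * e s - d * min c (max 0 (y s)) \<le> 0" if "c < y s" for s
  proof -
    have "b * e s \<le> b * c1"
      using assms(2,5) by (rule mult_left_mono[rotated])
    then show ?thesis
      using that assms(6-8) by simp
  qed
qed (use assms in auto)

lemma linear_relaxation_bound:
  fixes y g :: "real \<Rightarrow> real"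
  assumes deriv: "\<And>t. t \<ge> 0 \<Longrightarrow> (y has_real_derivative g t - c * y t) (at t within {0..})"
    and "0 \<le> c" and g: "\<And>t. t \<ge> 0 \<Longrightarrow> \<bar>g t - c * L\<bar> \<le> c * B"
    and "\<bar>y 0 - L\<bar> \<le> B" and "0 \<le> t"
  shows "\<bar>y t - L\<bar> \<le> B"
proof -
  have "y t \<le> L + B"
  proof (rule halfline_barrier_upper[OF deriv order_refl _ _ \<open>0 \<le> t\<close>])
    fix s assume "0 \<le> s" "L + B < y s"
    then have "c * (L + B) \<le> c * y s"
      using \<open>0 \<le> c\<close> by (simp add: mult_left_mono)
    then show "g s - c * y s \<le> 0"
      using g[OF \<open>0 \<le> s\<close>] by (simp add: algebra_simps abs_le_iff)
  qed (use assms in auto)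
  moreover have "L - B \<le> y t"
  proof (rule halfline_barrier_lower[OF deriv order_refl _ _ \<open>0 \<le> t\<close>])
    fix s assume "0 \<le> s" "y s < L - B"
    then have "c * y s \<le> c * (L - B)"
      using \<open>0 \<le> c\<close> by (simp add: mult_left_mono)
    then show "0 \<le> g s - c * y s"
      using g[OF \<open>0 \<le> s\<close>] by (simp add: algebra_simps abs_le_iff)
  qed (use assms in auto)
  ultimately show ?thesis
    by (simp add: abs_le_iff)
qed

lemma linear_relaxation_eventually_le:
  fixes y g :: "real \<Rightarrow> real"
  assumes deriv: "\<And>t. t \<ge> 0 \<Longrightarrow> (y has_real_derivative g t - c * y t) (at t within {0..})"
    and "0 < c" and g: "(g \<longlongrightarrow> c * L) at_top" and "0 < \<epsilon>"
  shows "\<forall>\<^sub>F t in at_top. y t \<le> L + \<epsilon>"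
proof (rule halfline_eventually_le[OF deriv])
  show "0 < c * \<epsilon> / 2"
    using assms by simp
  have "\<forall>\<^sub>F t in at_top. dist (g t) (c * L) < c * \<epsilon> / 2"
    by (rule tendstoD[OF g]) (use assms in simp)
  then show "\<forall>\<^sub>F t in at_top. L + \<epsilon> < y t \<longrightarrow> g t - c * y t \<le> - (c * \<epsilon> / 2)"
  proof (rule eventually_mono, intro impI)
    fix t assume "dist (g t) (c * L) < c * \<epsilon> / 2" "L + \<epsilon> < y t"
    moreover have "c * (L + \<epsilon>) < c * y t"
      using \<open>L + \<epsilon> < y t\<close> \<open>0 < c\<close> by simp
    ultimately show "g t - c * y t \<le> - (c * \<epsilon> / 2)"
      unfolding dist_real_def abs_less_iff distrib_left by linarith
  qed
qed

lemma linear_relaxation_tendsto: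
  fixes y g :: "real \<Rightarrow> real"
  assumes deriv: "\<And>t. t \<ge> 0 \<Longrightarrow> (y has_real_derivative g t - c * y t) (at t within {0..})"
    and "0 < c" and g: "(g \<longlongrightarrow> c * L) at_top"
  shows "(y \<longlongrightarrow> L) at_top"
proof (rule order_tendstoI)
  fix u assume "L < u"
  have "\<forall>\<^sub>F t in at_top. y t \<le> L + (u - L) / 2"
    using linear_relaxation_eventually_le[OF deriv \<open>0 < c\<close> g] \<open>L < u\<close> by simp
  then show "\<forall>\<^sub>F t in at_top. y t < u"
    by (rule eventually_mono) (use \<open>L < u\<close> in \<open>simp add: field_simps\<close>)
next
  fix u assume "u < L"
  have "((\<lambda>t. - y t) has_real_derivative - g t - c * - y t) (at t within {0..})" if "t \<ge> 0" for t
    using DERIV_minus[OF deriv[OF that]] by simp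
  moreover have "((\<lambda>t. - g t) \<longlongrightarrow> c * - L) at_top"
    using tendsto_minus[OF g] by simp
  ultimately have "\<forall>\<^sub>F t in at_top. - y t \<le> - L + (L - u) / 2"
    using linear_relaxation_eventually_le[of "\<lambda>t. - y t" "\<lambda>t. - g t" c "- L"] \<open>0 < c\<close> \<open>u < L\<close>
    by simp
  then show "\<forall>\<^sub>F t in at_top. u < y t"
    by (rule eventually_mono) (use \<open>u < L\<close> in \<open>simp add: field_simps\<close>)
qed

section \<open>Existence for bounded Lipschitz vector fields\<close>

lemma exp_mult_has_integral:
  fixes L \<tau> :: real
  assumes "L \<noteq> 0" "0 \<le> \<tau>"
  shows "((\<lambda>s. exp (L * s)) has_integral (exp (L * \<tau>) - 1) / L) {0..\<tau>}"
proof -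
  have "((\<lambda>s. exp (L * s) / L) has_real_derivative exp (L * s)) (at s within {0..\<tau>})" for s
    using \<open>L \<noteq> 0\<close> by (auto intro!: derivative_eq_intros)
  then have "((\<lambda>s. exp (L * s)) has_integral exp (L * \<tau>) / L - exp (L * 0) / L) {0..\<tau>}"
    by (intro fundamental_theorem_of_calculus \<open>0 \<le> \<tau>\<close>) (simp add: has_real_derivative_iff_has_vector_derivative)
  then show ?thesis
    by (simp add: diff_divide_distrib)
qed

lemma norm_weighted_integral_le:
  fixes h :: "real \<Rightarrow> 'a::banach"
  assumes "h integrable_on {0..\<tau>}" "0 \<le> \<tau>" "0 < L"
    and h: "\<And>s. s \<in> {0..\<tau>} \<Longrightarrow> norm (h s) \<le> C * exp (L * s)"
  shows "norm (exp (- (L * \<tau>)) *\<^sub>R integral {0..\<tau>} h) \<le> C / L"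
proof -
  have "norm (h 0) \<le> C"
    using h[of 0] \<open>0 \<le> \<tau>\<close> by simp
  then have "0 \<le> C"
    using norm_ge_zero order_trans by blast
  have int: "((\<lambda>s. C * exp (L * s)) has_integral C * ((exp (L * \<tau>) - 1) / L)) {0..\<tau>}"
    using has_integral_mult_right[OF exp_mult_has_integral] assms by simp
  have "norm (integral {0..\<tau>} h) \<le> integral {0..\<tau>} (\<lambda>s. C * exp (L * s))"
    by (rule integral_norm_bound_integral[OF assms(1) has_integral_integrable[OF int] h])
  also have "\<dots> = C * ((exp (L * \<tau>) - 1) / L)"
    by (rule integral_unique[OF int])
  finally have "exp (- (L * \<tau>)) * norm (integral {0..\<tau>} h)
      \<le> exp (- (L * \<tau>)) * (C * ((exp (L * \<tau>) - 1) / L))"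
    by (rule mult_left_mono) simp
  also have "\<dots> = C / L * (1 - exp (- (L * \<tau>)))"
    by (simp add: algebra_simps diff_divide_distrib flip: exp_add)
  also have "\<dots> \<le> C / L"
    using \<open>0 \<le> C\<close> \<open>0 < L\<close> by (intro mult_left_le) auto
  finally show ?thesis
    by simp
qed

lemma continuous_on_integral_max0:
  fixes h :: "real \<Rightarrow> 'a::banach"
  assumes "continuous_on UNIV h"
  shows "continuous_on UNIV (\<lambda>t. integral {0..max 0 t} h)"
proof -
  have int: "continuous_on {0..T} (\<lambda>r. integral {0..r} h)" for T
    by (intro indefinite_integral_continuous_1 integrable_continuous_real
        continuous_on_subset[OF assms]) auto
  have "continuous_on {-T<..<T} (\<lambda>t. integral {0..max 0 t} h)" for T
    by (rule continuous_on_compose2[OF int[of T]]) (auto intro!: continuous_intros)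
  then have "isCont (\<lambda>t. integral {0..max 0 t} h) t" for t
    by (rule continuous_on_interior[where S = "{-(\<bar>t\<bar> + 1)<..<\<bar>t\<bar> + 1}"]) auto
  then show ?thesis
    by (simp add: continuous_at_imp_continuous_on)
qed

text \<open>Bielecki's weighted norm: writing a trajectory as \<open>p + exp (L t) u t\<close> with \<open>u\<close> bounded and
  continuous, the Picard operator becomes a contraction on \<open>u\<close> once \<open>L\<close> is at least twice the
  Lipschitz constant of the vector field.\<close>

definition picard_path :: "real \<Rightarrow> 'a \<Rightarrow> (real \<Rightarrow>\<^sub>C 'a) \<Rightarrow> real \<Rightarrow> 'a::real_normed_vector" where
  "picard_path L p u t = p + exp (L * max 0 t) *\<^sub>R apply_bcontfun u t"

definition picard_step :: "real \<Rightarrow> ('a \<Rightarrow> 'a) \<Rightarrow> 'a \<Rightarrow> (real \<Rightarrow>\<^sub>C 'a) \<Rightarrow> real \<Rightarrow> 'a::banach" where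
  "picard_step L g p u t =
     exp (- (L * max 0 t)) *\<^sub>R integral {0..max 0 t} (\<lambda>s. g (picard_path L p u s))"

lemma continuous_on_picard_integrand:
  assumes "continuous_on UNIV g"
  shows "continuous_on UNIV (\<lambda>s. g (picard_path L p u s))"
proof -
  have "continuous_on UNIV (picard_path L p u)"
    unfolding picard_path_def by (intro continuous_intros) auto
  then show ?thesis
    using continuous_on_compose2[OF assms] by blast
qed

lemma continuous_on_picard_step:
  assumes "continuous_on UNIV g"
  shows "continuous_on UNIV (picard_step L g p u)"
  unfolding picard_step_def
  by (intro continuous_intros continuous_on_integral_max0 continuous_on_picard_integrand assms)

lemma norm_picard_step_le:
  assumes "continuous_on UNIV g" "\<And>z. norm (g z) \<le> G" "0 < L"
  shows "norm (picard_step L g p u t) \<le> G / L"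
  unfolding picard_step_def
proof (rule norm_weighted_integral_le)
  show "(\<lambda>s. g (picard_path L p u s)) integrable_on {0..max 0 t}"
    by (intro integrable_continuous_real continuous_on_subset[OF continuous_on_picard_integrand]
        assms(1)) auto
  show "norm (g (picard_path L p u s)) \<le> G * exp (L * s)" if "s \<in> {0..max 0 t}" for s
  proof -
    have "0 \<le> G"
      using assms(2)[of 0] norm_ge_zero order_trans by blast
    moreover have "1 \<le> exp (L * s)"
      using that \<open>0 < L\<close> by simp
    ultimately have "G \<le> G * exp (L * s)"
      using mult_left_mono[of 1 "exp (L * s)" G] by simp
    then show ?thesis
      using assms(2) order_trans by blast
  qed
qed (use assms in auto)

lemma dist_picard_step_le:
  assumes lipschitz: "Lg-lipschitz_on UNIV g" and "0 < L" "2 * Lg \<le> L"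
  shows "dist (picard_step L g p u t) (picard_step L g p v t) \<le> dist u v / 2"
proof -
  define \<tau> where "\<tau> = max 0 t"
  have cont: "continuous_on UNIV g"
    using lipschitz_on_continuous_on[OF lipschitz] .
  have int: "(\<lambda>s. g (picard_path L p w s)) integrable_on {0..\<tau>}" for w
    by (intro integrable_continuous_real continuous_on_subset[OF continuous_on_picard_integrand]
        cont) auto
  have "norm (g (picard_path L p u s) - g (picard_path L p v s)) \<le> Lg * dist u v * exp (L * s)"
    if "s \<in> {0..\<tau>}" for s
  proof -
    have "norm (g (picard_path L p u s) - g (picard_path L p v s))
        \<le> Lg * norm (picard_path L p u s - picard_path L p v s)"
      by (rule lipschitz_on_normD[OF lipschitz]) auto
    also have "norm (picard_path L p u s - picard_path L p v s)
        = exp (L * s) * dist (apply_bcontfun u s) (apply_bcontfun v s)"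
      using that by (simp add: picard_path_def dist_norm flip: scaleR_diff_right)
    also have "Lg * \<dots> \<le> Lg * (exp (L * s) * dist u v)"
      using lipschitz_on_nonneg[OF lipschitz] by (intro mult_left_mono dist_bounded) auto
    finally show ?thesis
      by (simp add: algebra_simps)
  qed
  then have "norm (exp (- (L * \<tau>)) *\<^sub>R integral {0..\<tau>}
      (\<lambda>s. g (picard_path L p u s) - g (picard_path L p v s))) \<le> Lg * dist u v / L"
    using int \<open>0 < L\<close> by (intro norm_weighted_integral_le integrable_diff) (auto simp: \<tau>_def)
  also have "\<dots> \<le> dist u v / 2"
  proof -
    have "2 * Lg * dist u v \<le> L * dist u v"
      using assms by (intro mult_right_mono) auto
    then show ?thesis
      using \<open>0 < L\<close> by (simp add: field_simps)
  qed
  finally show ?thesis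
    using integral_diff[OF int int]
    by (simp add: picard_step_def dist_norm \<tau>_def flip: scaleR_diff_right)
qed

lemma picard_fixpoint_solves:
  assumes "continuous_on UNIV g" and fixpoint: "picard_step L g p u = apply_bcontfun u"
    and "0 \<le> t"
  defines "z \<equiv> picard_path L p u"
  shows "z 0 = p" and "(z has_vector_derivative g (z t)) (at t within {0..})"
proof -
  have z: "z t = p + integral {0..max 0 t} (\<lambda>s. g (z s))" for t
  proof -
    have "apply_bcontfun u t = exp (- (L * max 0 t)) *\<^sub>R integral {0..max 0 t} (\<lambda>s. g (z s))"
      using fun_cong[OF fixpoint, of t] by (simp add: picard_step_def z_def)
    then show ?thesis
      by (simp add: z_def picard_path_def flip: exp_add)
  qed
  show "z 0 = p"
    using z[of 0] by simp
  have z_nonneg: "z r = p + integral {0..r} (\<lambda>s. g (z s))" if "0 \<le> r" for r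
    using z[of r] that by (simp only: max_absorb2)
  have gz: "continuous_on UNIV (\<lambda>s. g (z s))"
    unfolding z_def by (rule continuous_on_picard_integrand[OF assms(1)])
  have "((\<lambda>r. integral {0..r} (\<lambda>s. g (z s))) has_vector_derivative g (z t))
      (at t within {0..t + 1})"
    by (rule integral_has_vector_derivative[OF continuous_on_subset[OF gz]]) (use \<open>0 \<le> t\<close> in auto)
  then have "((\<lambda>r. p + integral {0..r} (\<lambda>s. g (z s))) has_vector_derivative g (z t))
      (at t within {0..t + 1})"
    using has_vector_derivative_add[OF has_vector_derivative_const] by fastforce
  moreover have "at t within {0..t + 1} = at t within {0..}"
    by (rule at_within_nhd[where S = "{..<t + 1}"]) (use \<open>0 \<le> t\<close> in auto)
  ultimately have "((\<lambda>r. p + integral {0..r} (\<lambda>s. g (z s))) has_vector_derivative g (z t))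
      (at t within {0..})"
    by simp
  then show "(z has_vector_derivative g (z t)) (at t within {0..})"
    by (rule has_vector_derivative_transform[rotated 2]) (use \<open>0 \<le> t\<close> in \<open>auto intro!: z_nonneg\<close>)
qed

theorem bounded_lipschitz_ode_solution_exists:
  fixes g :: "'a::banach \<Rightarrow> 'a"
  assumes lipschitz: "Lg-lipschitz_on UNIV g" and bound: "\<And>z. norm (g z) \<le> G"
  obtains z where "z 0 = p" "\<And>t. 0 \<le> t \<Longrightarrow> (z has_vector_derivative g (z t)) (at t within {0..})"
proof -
  define L where "L = 2 * Lg + 1"
  have L: "0 < L" "2 * Lg \<le> L"
    using lipschitz_on_nonneg[OF lipschitz] by (auto simp: L_def)
  have cont: "continuous_on UNIV g"
    using lipschitz_on_continuous_on[OF lipschitz] .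
  have "picard_step L g p u \<in> bcontfun" for u
    using continuous_on_picard_step[OF cont] norm_picard_step_le[OF cont bound L(1)]
    unfolding bcontfun_def bounded_iff by blast
  then have step: "apply_bcontfun (Bcontfun (picard_step L g p u)) = picard_step L g p u" for u
    by (simp add: Bcontfun_inverse)
  have "dist (Bcontfun (picard_step L g p u)) (Bcontfun (picard_step L g p v)) \<le> 1 / 2 * dist u v"
    for u v
    by (rule dist_bound) (use dist_picard_step_le[OF lipschitz L] step in simp)
  then obtain u where "Bcontfun (picard_step L g p u) = u"
    using banach_fix_type[of "1 / 2" "\<lambda>u. Bcontfun (picard_step L g p u)"] by auto
  then have "picard_step L g p u = apply_bcontfun u"
    using step by metis
  then show thesis
    using picard_fixpoint_solves[OF cont] that by blast
qed

lemma dist_state_le: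
  "dist z (w::state) \<le> \<bar>fst z - fst w\<bar> + \<bar>fst (snd z) - fst (snd w)\<bar> + \<bar>snd (snd z) - snd (snd w)\<bar>"
proof -
  have "dist z w = norm (fst z - fst w, fst (snd z) - fst (snd w), snd (snd z) - snd (snd w))"
    by (cases z; cases w) (simp add: dist_norm)
  also have "\<dots> \<le> norm (fst z - fst w) + norm (fst (snd z) - fst (snd w), snd (snd z) - snd (snd w))"
    by (rule norm_Pair_le)
  also have "\<dots> \<le> norm (fst z - fst w) + (norm (fst (snd z) - fst (snd w)) + norm (snd (snd z) - snd (snd w)))"
    by (intro add_left_mono norm_Pair_le)
  finally show ?thesis
    by simp
qed

lemma has_vector_derivative_state_components:
  fixes x :: "real \<Rightarrow> state"
  assumes "(x has_vector_derivative v) (at t within S)"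
  shows "((\<lambda>t. fst (x t)) has_real_derivative fst v) (at t within S)"
    and "((\<lambda>t. fst (snd (x t))) has_real_derivative fst (snd v)) (at t within S)"
    and "((\<lambda>t. snd (snd (x t))) has_real_derivative snd (snd v)) (at t within S)"
proof -
  have snd: "((\<lambda>t. snd (x t)) has_vector_derivative snd v) (at t within S)"
    by (rule bounded_linear.has_vector_derivative[OF bounded_linear_snd assms])
  show "((\<lambda>t. fst (x t)) has_real_derivative fst v) (at t within S)"
    using bounded_linear.has_vector_derivative[OF bounded_linear_fst assms]
    by (simp add: has_real_derivative_iff_has_vector_derivative)
  show "((\<lambda>t. fst (snd (x t))) has_real_derivative fst (snd v)) (at t within S)"
    using bounded_linear.has_vector_derivative[OF bounded_linear_fst snd]
    by (simp add: has_real_derivative_iff_has_vector_derivative)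
  show "((\<lambda>t. snd (snd (x t))) has_real_derivative snd (snd v)) (at t within S)"
    using bounded_linear.has_vector_derivative[OF bounded_linear_snd snd]
    by (simp add: has_real_derivative_iff_has_vector_derivative)
qed

lemma has_real_derivative_min0_square:
  "((\<lambda>w::real. (min w 0)\<^sup>2) has_real_derivative 2 * min z 0) (at z)"
proof (cases z "0::real" rule: linorder_cases)
  case less
  have "\<forall>\<^sub>F w in nhds z. (min w 0)\<^sup>2 = w\<^sup>2"
    using eventually_nhds_in_open[of "{..<0}" z] less by (auto elim!: eventually_mono)
  moreover have "((\<lambda>w. w\<^sup>2) has_real_derivative 2 * z) (at z)"
    by (auto intro!: derivative_eq_intros)
  ultimately show ?thesis
    using DERIV_cong_ev[OF refl _ refl] less by fastforce
next
  case greater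
  have "\<forall>\<^sub>F w in nhds z. (min w 0)\<^sup>2 = 0"
    using eventually_nhds_in_open[of "{0<..}" z] greater by (auto elim!: eventually_mono)
  then show ?thesis
    using DERIV_cong_ev[OF refl _ refl, of _ "\<lambda>_. 0"] greater by fastforce
next
  case equal
  \<comment> \<open>The difference quotient at the kink is \<open>min w 0\<close> itself.\<close>
  have "(min w 0)\<^sup>2 / w = min w 0" for w :: real
    by (cases "w = 0") (auto simp: power2_eq_square min_def)
  moreover have "((\<lambda>w::real. min w 0) \<longlongrightarrow> min 0 0) (at 0)"
    by (intro tendsto_min tendsto_ident_at tendsto_const)
  ultimately show ?thesis
    using equal by (simp add: has_field_derivative_iff)
qed

lemma min0_mult_le_min0_mult_min0: "min x 0 * y \<le> min x 0 * min (y::real) 0"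
  by (cases "x \<le> 0"; cases "y \<le> 0") (auto simp: mult_le_cancel_left intro: mult_nonpos_nonneg)

lemma negative_parts_growth:
  fixes \<beta> K a b c E F R :: real
  assumes "0 < \<beta>" "0 < K" "0 \<le> a" "0 \<le> b" "0 \<le> c" "\<bar>E\<bar> \<le> R"
  shows "2 * min E 0 * (\<beta> * F * (1 - E / K) - a * E) + 2 * min F 0 * (b * E - c * F)
    \<le> (\<beta> * (1 + R / K) + b) * ((min E 0)\<^sup>2 + (min F 0)\<^sup>2)"
proof -
  define e g where "e = min E 0" and "g = min F 0"
  have eE: "e * E = e\<^sup>2" and gF: "g * F = g\<^sup>2" and eg: "0 \<le> e * g"
    by (auto simp: e_def g_def min_def power2_eq_square mult_nonpos_nonpos)
  have "0 \<le> R"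
    using assms(6) by linarith
  have "e * F * (1 - E / K) \<le> (1 + R / K) * (e * g)"
  proof (cases "E < 0")
    case True
    have "- E / K \<le> R / K"
      using assms by (intro divide_right_mono) auto
    then have "0 \<le> 1 - E / K" "1 - E / K \<le> 1 + R / K"
      using True assms by (auto simp: divide_le_eq)
    then have "e * F * (1 - E / K) \<le> e * g * (1 - E / K)"
      using min0_mult_le_min0_mult_min0[of E F] by (simp add: e_def g_def mult_right_mono)
    also have "\<dots> \<le> (1 + R / K) * (e * g)"
      using eg \<open>1 - E / K \<le> 1 + R / K\<close> by (simp add: mult.commute mult_left_mono)
    finally show ?thesis .
  next
    case False
    then show ?thesis
      using eg assms by (simp add: e_def)
  qed
  then have E_term: "\<beta> * (e * F * (1 - E / K)) \<le> \<beta> * ((1 + R / K) * (e * g))"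
    using assms by (intro mult_left_mono) auto
  have F_term: "b * (g * E) \<le> b * (e * g)"
    using min0_mult_le_min0_mult_min0[of F E] assms
    by (intro mult_left_mono) (simp_all add: e_def g_def mult.commute)
  have "(\<beta> * (1 + R / K) + b) * (2 * (e * g)) \<le> (\<beta> * (1 + R / K) + b) * (e\<^sup>2 + g\<^sup>2)"
    using sum_squares_bound[of e g] assms \<open>0 \<le> R\<close>
    by (intro mult_left_mono) (simp_all add: power2_eq_square)
  moreover have "0 \<le> a * e\<^sup>2" "0 \<le> c * g\<^sup>2"
    using assms by simp_all
  moreover have "2 * e * (\<beta> * F * (1 - E / K) - a * E) + 2 * g * (b * E - c * F)
      = 2 * (\<beta> * (e * F * (1 - E / K))) - 2 * (a * (e * E)) + 2 * (b * (g * E)) - 2 * (c * (g * F))"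
    "(\<beta> * (1 + R / K) + b) * (2 * (e * g)) = 2 * (\<beta> * ((1 + R / K) * (e * g))) + 2 * (b * (e * g))"
    by (simp_all add: algebra_simps)
  ultimately show ?thesis
    using E_term F_term unfolding e_def[symmetric] g_def[symmetric] eE gF by linarith
qed

lemma lipschitz_on_mult_bounded:
  fixes f g :: "'a::metric_space \<Rightarrow> real"
  assumes "L-lipschitz_on X f" "M-lipschitz_on X g"
    and "\<And>x. x \<in> X \<Longrightarrow> \<bar>f x\<bar> \<le> A" "\<And>x. x \<in> X \<Longrightarrow> \<bar>g x\<bar> \<le> B" "0 \<le> A" "0 \<le> B"
  shows "(A * M + B * L)-lipschitz_on X (\<lambda>x. f x * g x)"
proof (rule lipschitz_onI)
  fix x y assume xy: "x \<in> X" "y \<in> X"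
  have "dist (f x * g x) (f y * g y) = \<bar>f x * (g x - g y) + g y * (f x - f y)\<bar>"
    by (simp add: dist_real_def algebra_simps)
  also have "\<dots> \<le> \<bar>f x\<bar> * dist (g x) (g y) + \<bar>g y\<bar> * dist (f x) (f y)"
    by (simp add: dist_real_def abs_mult abs_triangle_ineq order_trans[OF abs_triangle_ineq])
  also have "\<dots> \<le> A * (M * dist x y) + B * (L * dist x y)"
    using assms xy by (intro add_mono mult_mono lipschitz_onD) (auto intro: lipschitz_on_nonneg)
  finally show "dist (f x * g x) (f y * g y) \<le> (A * M + B * L) * dist x y"
    by (simp add: algebra_simps)
qed (use assms lipschitz_on_nonneg[OF assms(1)] lipschitz_on_nonneg[OF assms(2)] in auto)

lemma mem_domD: "z \<in> domD \<longleftrightarrow> 0 \<le> fst z \<and> 0 \<le> fst (snd z) \<and> 0 \<le> snd (snd z)"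
  by (cases z) (simp add: domD_def)

lemma mem_cbox_state:
  "(z::state) \<in> cbox 0 (c1, c2, c3) \<longleftrightarrow>
    0 \<le> fst z \<and> fst z \<le> c1 \<and> 0 \<le> fst (snd z) \<and> fst (snd z) \<le> c2 \<and> 0 \<le> snd (snd z) \<and> snd (snd z) \<le> c3"
  by (cases z) (auto simp: zero_prod_def cbox_interval)

lemma clamp_state_eq:
  "0 \<le> c1 \<Longrightarrow> 0 \<le> c2 \<Longrightarrow> 0 \<le> c3 \<Longrightarrow>
    clamp 0 (c1, c2, c3) ((E, M, F) :: state) = (min c1 (max 0 E), min c2 (max 0 M), min c3 (max 0 F))"
  by (auto simp: clamp_def Basis_prod_def sum.union_disjoint sum.reindex inj_on_def
      inner_prod_def zero_prod_def)

lemma dist_fst_snd_le: "dist (fst (snd x)) (fst (snd y)) \<le> dist x y"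
  using order_trans[OF dist_fst_le dist_snd_le] .

lemma dist_snd_snd_le: "dist (snd (snd x)) (snd (snd y)) \<le> dist x y"
  using order_trans[OF dist_snd_le dist_snd_le] .

lemma tendsto_stateI:
  fixes x :: "'b \<Rightarrow> state"
  assumes "((\<lambda>t. fst (x t)) \<longlongrightarrow> E) F" "((\<lambda>t. fst (snd (x t))) \<longlongrightarrow> M) F"
    and "((\<lambda>t. snd (snd (x t))) \<longlongrightarrow> G) F"
  shows "(x \<longlongrightarrow> (E, M, G)) F"
  using tendsto_Pair[OF assms(1) tendsto_Pair[OF assms(2,3)]] by simp

lemma mosq_vf_apply:
  "mosq_vf \<beta>E \<nu>E \<delta>E \<delta>M \<delta>F K \<nu> z =
    (\<beta>E * snd (snd z) * (1 - fst z / K) - (\<nu>E + \<delta>E) * fst z,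
     (1 - \<nu>) * \<nu>E * fst z - \<delta>M * fst (snd z), \<nu> * \<nu>E * fst z - \<delta>F * snd (snd z))"
  by (cases z) (simp add: mosq_vf_def)

lemma mosq_vf_lipschitz_on_bounded:
  assumes "bounded S"
  obtains L where "L-lipschitz_on S (mosq_vf \<beta>E \<nu>E \<delta>E \<delta>M \<delta>F K \<nu>)"
proof -
  obtain R where "0 < R" and R: "\<And>z. z \<in> S \<Longrightarrow> norm z \<le> R"
    using assms bounded_pos by blast
  have E: "1-lipschitz_on S fst"
    by (rule lipschitz_onI) (simp_all add: dist_fst_le)
  have M: "1-lipschitz_on S (\<lambda>z. fst (snd z))" and F: "1-lipschitz_on S (\<lambda>z. snd (snd z))"
    by (rule lipschitz_onI; simp add: dist_fst_snd_le dist_snd_snd_le)+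
  have E_bound: "\<bar>fst z\<bar> \<le> R" and F_bound: "\<bar>snd (snd z)\<bar> \<le> R" if "z \<in> S" for z
    using R[OF that] dist_fst_le[of z 0] dist_snd_snd_le[of z 0]
    by (simp_all add: dist_norm)
  have "(\<bar>\<beta>E\<bar> * 1)-lipschitz_on S (\<lambda>z. \<beta>E * snd (snd z))"
    by (rule lipschitz_on_cmult_real[OF F])
  moreover have "(0 + \<bar>1 / K\<bar> * 1)-lipschitz_on S (\<lambda>z. 1 - 1 / K * fst z)"
    by (intro lipschitz_on_diff lipschitz_on_constant lipschitz_on_cmult_real E)
  moreover have "\<bar>1 - 1 / K * fst z\<bar> \<le> 1 + \<bar>1 / K\<bar> * R" if "z \<in> S" for z
  proof -
    have "\<bar>1 - 1 / K * fst z\<bar> \<le> 1 + \<bar>1 / K\<bar> * \<bar>fst z\<bar>"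
      using abs_triangle_ineq4[of 1 "1 / K * fst z"] by (simp add: abs_mult)
    also have "\<dots> \<le> 1 + \<bar>1 / K\<bar> * R"
      using E_bound[OF that] by (intro add_left_mono mult_left_mono) auto
    finally show ?thesis .
  qed
  ultimately have prod: "(\<bar>\<beta>E\<bar> * R * (0 + \<bar>1 / K\<bar> * 1) + (1 + \<bar>1 / K\<bar> * R) * (\<bar>\<beta>E\<bar> * 1))-lipschitz_on S
      (\<lambda>z. \<beta>E * snd (snd z) * (1 - 1 / K * fst z))"
    using F_bound \<open>0 < R\<close>
    by (intro lipschitz_on_mult_bounded) (auto simp: abs_mult mult_left_mono)
  note E_term = lipschitz_on_diff[OF prod lipschitz_on_cmult_real[OF E, of "\<nu>E + \<delta>E"]]
  note M_term = lipschitz_on_diff[OF lipschitz_on_cmult_real[OF E] lipschitz_on_cmult_real[OF M]]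
  note F_term = lipschitz_on_diff[OF lipschitz_on_cmult_real[OF E] lipschitz_on_cmult_real[OF F]]
  show thesis
    using lipschitz_on_Pair[OF E_term lipschitz_on_Pair[OF M_term F_term]]
    by (intro that) (simp add: mosq_vf_apply[abs_def])
qed

locale mosquito =
  fixes \<beta>E \<nu>E \<delta>E \<delta>M \<delta>F K \<nu> :: real
  assumes pos: "0 < \<beta>E" "0 < \<nu>E" "0 < \<delta>E" "0 < \<delta>M" "0 < \<delta>F" "0 < K"
    and \<nu>: "0 < \<nu>" "\<nu> < 1"
begin

abbreviation f :: "state \<Rightarrow> state" where
  "f \<equiv> mosq_vf \<beta>E \<nu>E \<delta>E \<delta>M \<delta>F K \<nu>"

definition cE :: real where "cE = \<nu>E + \<delta>E"
definition bM :: real where "bM = (1 - \<nu>) * \<nu>E"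
definition bF :: real where "bF = \<nu> * \<nu>E"

lemma rates_pos: "0 < cE" "0 < bM" "0 < bF"
  using pos \<nu> by (simp_all add: cE_def bM_def bF_def)

lemma f_components:
  "fst (f z) = \<beta>E * snd (snd z) * (1 - fst z / K) - cE * fst z"
  "fst (snd (f z)) = bM * fst z - \<delta>M * fst (snd z)"
  "snd (snd (f z)) = bF * fst z - \<delta>F * snd (snd z)"
  by (simp_all add: mosq_vf_apply cE_def bM_def bF_def)

lemma solution_deriv:
  assumes "is_solution f x" "0 \<le> t"
  shows "((\<lambda>t. fst (x t)) has_real_derivative
      \<beta>E * snd (snd (x t)) * (1 - fst (x t) / K) - cE * fst (x t)) (at t within {0..})"
    and "((\<lambda>t. fst (snd (x t))) has_real_derivative
      bM * fst (x t) - \<delta>M * fst (snd (x t))) (at t within {0..})"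
    and "((\<lambda>t. snd (snd (x t))) has_real_derivative
      bF * fst (x t) - \<delta>F * snd (snd (x t))) (at t within {0..})"
  using has_vector_derivative_state_components[of x "f (x t)" t "{0..}"] assms
  by (simp_all add: is_solution_def f_components)

lemma solution_E_F_nonneg:
  assumes sol: "is_solution f x" and "x 0 \<in> domD" and "0 \<le> t"
  shows "0 \<le> fst (x t) \<and> 0 \<le> snd (snd (x t))"
proof -
  define E F where "E s = fst (x s)" and "F s = snd (snd (x s))" for s
  note dE = solution_deriv(1)[OF sol, folded E_def F_def]
  note dF = solution_deriv(3)[OF sol, folded E_def F_def]
  obtain R where R: "\<And>s. s \<in> {0..t} \<Longrightarrow> \<bar>E s\<bar> \<le> R"
    using compact_imp_bounded[OF compact_continuous_image[OF
        continuous_on_subset[OF DERIV_continuous_on[OF dE]], of "{0..t}"]]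
    by (force simp: bounded_iff)
  \<comment> \<open>The squared negative parts of \<open>E\<close> and \<open>F\<close> satisfy a linear growth bound and start at 0.\<close>
  define n where "n s = (min (E s) 0)\<^sup>2 + (min (F s) 0)\<^sup>2" for s
  define n' where "n' s = 2 * min (E s) 0 * (\<beta>E * F s * (1 - E s / K) - cE * E s)
      + 2 * min (F s) 0 * (bF * E s - \<delta>F * F s)" for s
  have "(n has_real_derivative n' s) (at s within {0..})" if "0 \<le> s" for s
    unfolding n_def n'_def
    by (intro DERIV_add DERIV_chain2[OF has_real_derivative_min0_square] dE dF that)
  then have "n t = 0"
  proof (rule halfline_gronwall_zero[where C = "\<beta>E * (1 + R / K) + bF"])
    show "n 0 = 0"
      using \<open>x 0 \<in> domD\<close> by (simp add: n_def E_def F_def mem_domD)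
    show "n' s \<le> (\<beta>E * (1 + R / K) + bF) * n s" if "0 \<le> s" "s \<le> t" for s
      unfolding n_def n'_def using negative_parts_growth pos rates_pos R that by simp
  qed (use \<open>0 \<le> t\<close> in \<open>auto simp: n_def\<close>)
  then show ?thesis
    by (simp add: n_def E_def F_def add_nonneg_eq_0_iff min_def split: if_splits)
qed

lemma solution_M_axis:
  assumes sol: "is_solution f x" and "x 0 \<in> domD" and "fst (x 0) = 0" "snd (snd (x 0)) = 0"
    and "0 \<le> t"
  shows "fst (x t) = 0 \<and> snd (snd (x t)) = 0"
proof -
  define E F where "E s = fst (x s)" and "F s = snd (snd (x s))" for s
  have EF: "0 \<le> E s" "0 \<le> F s" if "0 \<le> s" for s
    using solution_E_F_nonneg[OF sol \<open>x 0 \<in> domD\<close> that] by (simp_all add: E_def F_def)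
  \<comment> \<open>\<open>E + F\<close> grows at most linearly in itself, so it stays 0.\<close>
  have "E t + F t = 0"
  proof (rule halfline_gronwall_zero[where n = "\<lambda>s. E s + F s" and C = "\<beta>E + bF"])
    show "((\<lambda>s. E s + F s) has_real_derivative
        (\<beta>E * F s * (1 - E s / K) - cE * E s) + (bF * E s - \<delta>F * F s)) (at s within {0..})"
      if "0 \<le> s" for s
      unfolding E_def F_def by (intro DERIV_add solution_deriv[OF sol that])
    show "(\<beta>E * F s * (1 - E s / K) - cE * E s) + (bF * E s - \<delta>F * F s) \<le> (\<beta>E + bF) * (E s + F s)"
      if "0 \<le> s" for s
    proof -
      have "\<beta>E * F s * (1 - E s / K) \<le> \<beta>E * F s * 1"
        using EF[OF that] pos by (intro mult_left_mono) auto
      moreover have "0 \<le> cE * E s" "0 \<le> \<delta>F * F s" "0 \<le> \<beta>E * E s" "0 \<le> bF * F s"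
        using EF[OF that] pos rates_pos by simp_all
      ultimately show ?thesis
        by (simp add: algebra_simps)
    qed
  qed (use assms EF in \<open>simp_all add: E_def F_def\<close>)
  then show ?thesis
    using EF[OF \<open>0 \<le> t\<close>] by (simp add: E_def F_def)
qed

lemma solution_M_axis_tendsto_0:
  assumes sol: "is_solution f x" and "x 0 \<in> domD" and "fst (x 0) = 0" "snd (snd (x 0)) = 0"
  shows "(x \<longlongrightarrow> 0) at_top"
proof -
  have EF: "\<forall>\<^sub>F t in at_top. fst (x t) = 0 \<and> snd (snd (x t)) = 0"
    by (rule eventually_mono[OF eventually_ge_at_top[of 0]]) (rule solution_M_axis[OF assms])
  have ev: "\<forall>\<^sub>F t in at_top. fst (x t) = 0" "\<forall>\<^sub>F t in at_top. snd (snd (x t)) = 0"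
    "\<forall>\<^sub>F t in at_top. bM * fst (x t) = \<delta>M * 0"
    by (rule eventually_mono[OF EF], simp)+
  have "((\<lambda>t. fst (snd (x t))) \<longlongrightarrow> 0) at_top"
    using linear_relaxation_tendsto[OF solution_deriv(2)[OF sol] _ tendsto_eventually[OF ev(3)]] pos
    by simp
  then show ?thesis
    using tendsto_stateI[OF tendsto_eventually[OF ev(1)] _ tendsto_eventually[OF ev(2)]]
    by (simp add: zero_prod_def)
qed

lemma clamped_solution_in_box:
  assumes corner: "K \<le> c1" "bM * c1 \<le> \<delta>M * c2" "bF * c1 \<le> \<delta>F * c3"
    and deriv: "\<And>t. 0 \<le> t \<Longrightarrow>
      (z has_vector_derivative f (clamp 0 (c1, c2, c3) (z t))) (at t within {0..})"
    and "z 0 \<in> cbox 0 (c1, c2, c3)" and "0 \<le> t"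
  shows "z t \<in> cbox 0 (c1, c2, c3)"
proof -
  have "0 \<le> c1"
    using corner pos by simp
  then have "0 \<le> \<delta>M * c2" "0 \<le> \<delta>F * c3"
    using corner rates_pos by (auto intro: order_trans[rotated])
  then have c: "0 \<le> c1" "0 \<le> c2" "0 \<le> c3"
    using \<open>0 \<le> c1\<close> pos by (simp_all add: zero_le_mult_iff)
  define E M F where "E s = min c1 (max 0 (fst (z s)))" and "M s = min c2 (max 0 (fst (snd (z s))))"
    and "F s = min c3 (max 0 (snd (snd (z s))))" for s
  have clamp: "clamp 0 (c1, c2, c3) (z s) = (E s, M s, F s)" for s
    using clamp_state_eq[OF c, of "fst (z s)" "fst (snd (z s))" "snd (snd (z s))"]
    by (simp add: E_def M_def F_def)
  note d = has_vector_derivative_state_components[OF deriv, unfolded clamp f_components, simplified]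
  have EMF: "0 \<le> E s" "E s \<le> c1" "0 \<le> M s" "M s \<le> c2" "0 \<le> F s" "F s \<le> c3" for s
    using c by (simp_all add: E_def M_def F_def)
  have "0 \<le> fst (z t) \<and> fst (z t) \<le> c1"
  proof (rule halfline_invariant_interval[OF d(1)])
    show "0 \<le> \<beta>E * F s * (1 - E s / K) - cE * E s" if "fst (z s) < 0" for s
      using that EMF pos c by (simp add: E_def)
    show "\<beta>E * F s * (1 - E s / K) - cE * E s \<le> 0" if "c1 < fst (z s)" for s
    proof -
      have "E s = c1" "1 - c1 / K \<le> 0"
        using that corner pos by (simp_all add: E_def)
      then have "\<beta>E * F s * (1 - E s / K) \<le> 0"
        using EMF pos by (simp add: mult_nonneg_nonpos)
      moreover have "0 \<le> cE * E s"
        using EMF rates_pos by simp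
      ultimately show ?thesis
        by linarith
    qed
  qed (use assms in \<open>simp_all add: mem_cbox_state\<close>)
  moreover have "0 \<le> fst (snd (z t)) \<and> fst (snd (z t)) \<le> c2"
    by (rule clamped_linear_invariant_interval[OF d(2)[unfolded M_def]])
      (use assms EMF rates_pos pos in \<open>simp_all add: mem_cbox_state\<close>)
  moreover have "0 \<le> snd (snd (z t)) \<and> snd (snd (z t)) \<le> c3"
    by (rule clamped_linear_invariant_interval[OF d(3)[unfolded F_def]])
      (use assms EMF rates_pos pos in \<open>simp_all add: mem_cbox_state\<close>)
  ultimately show ?thesis
    by (simp add: mem_cbox_state)
qed

lemma solution_exists:
  assumes "p \<in> domD"
  obtains x where "is_solution f x" "x 0 = p"
proof -
  \<comment> \<open>Solve the system with the state clamped to a forward-invariant box containing \<open>p\<close>;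
    the clamp is inactive along the solution.\<close>
  define c1 where "c1 = max K (fst p)"
  define c where "c = (c1, max (fst (snd p)) (bM * c1 / \<delta>M), max (snd (snd p)) (bF * c1 / \<delta>F))"
  have "bM * c1 \<le> \<delta>M * max (fst (snd p)) (bM * c1 / \<delta>M)"
    "bF * c1 \<le> \<delta>F * max (snd (snd p)) (bF * c1 / \<delta>F)"
    using mult_left_mono[OF max.cobounded2, of "\<delta>M" "bM * c1 / \<delta>M"]
      mult_left_mono[OF max.cobounded2, of "\<delta>F" "bF * c1 / \<delta>F"] pos by simp_all
  then have corner: "K \<le> c1" "bM * c1 \<le> \<delta>M * fst (snd c)" "bF * c1 \<le> \<delta>F * snd (snd c)"
    by (simp_all add: c_def c1_def)
  have "p \<in> cbox 0 c"
    using assms by (auto simp: c_def c1_def mem_cbox_state mem_domD)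
  then have basis: "\<And>i. i \<in> Basis \<Longrightarrow> 0 \<bullet> i \<le> c \<bullet> i"
    by (auto simp: mem_box intro: order_trans)
  obtain L where L: "L-lipschitz_on (cbox 0 c) f"
    using mosq_vf_lipschitz_on_bounded[OF bounded_cbox] by blast
  have "1-lipschitz_on UNIV (clamp 0 c)"
    by (rule lipschitz_onI) (simp_all add: dist_clamps_le_dist_args)
  then have lipschitz: "(L * 1)-lipschitz_on UNIV (\<lambda>z. f (clamp 0 c z))"
    by (rule lipschitz_on_compose2) (rule lipschitz_on_subset[OF L], use clamp_in_interval[OF basis] in blast)
  moreover have "bounded (range (\<lambda>z. f (clamp 0 c z)))"
    by (intro clamp_bounded compact_imp_bounded compact_continuous_image
        lipschitz_on_continuous_on[OF L] compact_cbox)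
  then obtain G where bound: "\<And>z. norm (f (clamp 0 c z)) \<le> G"
    by (auto simp: bounded_iff)
  obtain z where "z 0 = p"
    and z: "\<And>t. 0 \<le> t \<Longrightarrow> (z has_vector_derivative f (clamp 0 c (z t))) (at t within {0..})"
    by (rule bounded_lipschitz_ode_solution_exists[where p = p, OF lipschitz bound]) blast
  have "z t \<in> cbox 0 c" if "0 \<le> t" for t
    using clamped_solution_in_box[OF corner, of z] z \<open>z 0 = p\<close> \<open>p \<in> cbox 0 c\<close> that
    by (simp add: c_def)
  then have "is_solution f z"
    using z by (simp add: is_solution_def)
  then show thesis
    using that \<open>z 0 = p\<close> by blast
qed

end

section \<open>The endemic regime\<close>

locale mosquito_endemic = mosquito +
  assumes R0_gt_1: "1 < R0 \<beta>E \<nu>E \<delta>E \<delta>F \<nu>"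
begin

definition Es :: real where "Es = K * (1 - 1 / R0 \<beta>E \<nu>E \<delta>E \<delta>F \<nu>)"
definition Ms :: real where "Ms = bM / \<delta>M * Es"
definition Fs :: real where "Fs = bF / \<delta>F * Es"
definition xs :: state where "xs = (Es, Ms, Fs)"

lemma R0_eq: "R0 \<beta>E \<nu>E \<delta>E \<delta>F \<nu> = \<beta>E * bF / (\<delta>F * cE)"
  by (simp add: R0_def cE_def bF_def mult.assoc)

lemma R0_gt_1_rates: "\<delta>F * cE < \<beta>E * bF"
  using R0_gt_1 pos rates_pos by (simp add: R0_eq)

lemma Es_pos: "0 < Es"
  using R0_gt_1 pos by (simp add: Es_def)

lemma one_minus_Es: "\<beta>E * (1 - Es / K) = \<delta>F * cE / bF"
  using pos rates_pos by (simp add: Es_def R0_eq)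

lemma Ms_eq: "\<delta>M * Ms = bM * Es" and Fs_eq: "\<delta>F * Fs = bF * Es"
  using pos by (simp_all add: Ms_def Fs_def)

lemma Ms_pos: "0 < Ms" and Fs_pos: "0 < Fs"
  using Es_pos pos rates_pos by (simp_all add: Ms_def Fs_def)

lemma f_xs: "f xs = 0"
proof -
  have "\<beta>E * Fs * (1 - Es / K) = Fs * (\<beta>E * (1 - Es / K))"
    by (simp only: mult.commute mult.left_commute)
  also have "\<dots> = Fs * (\<delta>F * cE / bF)"
    by (simp only: one_minus_Es)
  also have "\<dots> = cE * Es"
    using Fs_eq rates_pos by (simp add: field_simps)
  finally show ?thesis
    using Ms_eq Fs_eq by (simp add: f_components xs_def prod_eq_iff)
qed

lemma equilibria: "{x. is_equilibrium f domD x} = {0, xs}"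
proof (intro set_eqI iffI)
  fix x assume "x \<in> {x. is_equilibrium f domD x}"
  then have "f x = 0"
    by (simp add: is_equilibrium_def)
  then have E: "\<beta>E * snd (snd x) * (1 - fst x / K) = cE * fst x"
    and M: "fst (snd x) = bM / \<delta>M * fst x" and F: "snd (snd x) = bF / \<delta>F * fst x"
    using pos by (auto simp: prod_eq_iff f_components field_simps)
  show "x \<in> {0, xs}"
  proof (cases "fst x = 0")
    case True
    then show ?thesis
      using M F by (simp add: prod_eq_iff)
  next
    case False
    \<comment> \<open>Dividing the egg equation by \<open>E\<close> leaves a linear equation for \<open>E\<close>.\<close>
    have "fst x * (\<beta>E * (bF / \<delta>F) * (1 - fst x / K)) = fst x * cE"
      using E by (simp add: F algebra_simps)
    then have "\<beta>E * (bF / \<delta>F) * (1 - fst x / K) = cE"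
      using False mult_left_cancel by blast
    then have "\<beta>E * (1 - fst x / K) = \<beta>E * (1 - Es / K)"
      using one_minus_Es pos rates_pos by (simp add: field_simps)
    then have "fst x = Es"
      using pos by simp
    then show ?thesis
      using M F by (simp add: xs_def Ms_def Fs_def prod_eq_iff)
  qed
next
  fix x assume "x \<in> {0, xs}"
  then show "x \<in> {x. is_equilibrium f domD x}"
    using f_xs Es_pos Ms_pos Fs_pos
    by (auto simp: is_equilibrium_def mem_domD xs_def mosq_vf_apply zero_prod_def)
qed

lemma xs_neq_0: "xs \<noteq> 0"
  using Es_pos by (simp add: xs_def zero_prod_def)

text \<open>Lyapunov function in the \<open>(E, F)\<close>-plane; the weights \<open>lam\<close> and \<open>kk\<close> are chosen so that the
  cross terms of its derivative combine into the square in \<open>W\<close>.\<close>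

definition lam :: real where "lam = \<delta>F * cE / bF\<^sup>2"
definition kk :: real where "kk = \<delta>F / bF"

definition V :: "real \<Rightarrow> real \<Rightarrow> real" where
  "V E F = (E - Es)\<^sup>2 + lam * (F - Fs)\<^sup>2"

definition W :: "real \<Rightarrow> real \<Rightarrow> real" where
  "W E F = cE * ((E - Es) - kk * (F - Fs))\<^sup>2 + \<beta>E / K * F * (E - Es)\<^sup>2"

lemma lam_pos: "0 < lam"
  using pos rates_pos by (simp add: lam_def)

lemma W_nonneg: "0 \<le> F \<Longrightarrow> 0 \<le> W E F"
  using pos rates_pos by (simp add: W_def)

lemma V_nonneg: "0 \<le> V E F"
  using lam_pos by (simp add: V_def)

lemma V_lower_bounds: "(E - Es)\<^sup>2 \<le> V E F" "lam * (F - Fs)\<^sup>2 \<le> V E F"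
  using lam_pos by (simp_all add: V_def)

lemma lyapunov_identity:
  "2 * (E - Es) * (\<beta>E * F * (1 - E / K) - cE * E) + 2 * lam * (F - Fs) * (bF * E - \<delta>F * F)
    = - 2 * W E F"
proof -
  define p q where "p = E - Es" and "q = F - Fs"
  define \<rho> where "\<rho> = \<delta>F * cE / bF"
  have "\<rho> = \<beta>E - \<beta>E * Es / K" "\<rho> * Fs = cE * Es"
    using one_minus_Es Fs_eq rates_pos by (auto simp: \<rho>_def field_simps)
  then have "\<rho> * q = (\<beta>E - \<beta>E * Es / K) * F - cE * Es"
    by (simp add: q_def right_diff_distrib)
  then have E: "\<beta>E * F * (1 - E / K) - cE * E = \<rho> * q - cE * p - \<beta>E / K * F * p"
    using pos by (simp add: p_def field_simps)
  have F: "bF * E - \<delta>F * F = bF * p - \<delta>F * q"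
    using Fs_eq by (simp add: p_def q_def algebra_simps)
  have "\<rho> + lam * bF = 2 * cE * kk" "lam * \<delta>F = cE * kk\<^sup>2"
    using rates_pos by (simp_all add: \<rho>_def lam_def kk_def field_simps power2_eq_square)
  moreover have "2 * p * (\<rho> * q - cE * p - \<beta>E / K * F * p) + 2 * lam * q * (bF * p - \<delta>F * q)
      = - 2 * (cE * p\<^sup>2 - (\<rho> + lam * bF) * p * q + (lam * \<delta>F) * q\<^sup>2 + \<beta>E / K * F * p\<^sup>2)"
    by (simp add: algebra_simps power2_eq_square)
  ultimately have "2 * p * (\<rho> * q - cE * p - \<beta>E / K * F * p) + 2 * lam * q * (bF * p - \<delta>F * q)
      = - 2 * (cE * (p - kk * q)\<^sup>2 + \<beta>E / K * F * p\<^sup>2)"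
    by (simp add: algebra_simps power2_eq_square)
  then show ?thesis
    by (simp add: E F W_def p_def q_def)
qed

lemma V_deriv:
  assumes "is_solution f x" "0 \<le> t"
  shows "((\<lambda>t. V (fst (x t)) (snd (snd (x t)))) has_real_derivative
    - 2 * W (fst (x t)) (snd (snd (x t)))) (at t within {0..})"
proof -
  have "((\<lambda>t. V (fst (x t)) (snd (snd (x t)))) has_real_derivative
      2 * (fst (x t) - Es) * (\<beta>E * snd (snd (x t)) * (1 - fst (x t) / K) - cE * fst (x t))
      + 2 * lam * (snd (snd (x t)) - Fs) * (bF * fst (x t) - \<delta>F * snd (snd (x t)))) (at t within {0..})"
    unfolding V_def
    by (auto intro!: derivative_eq_intros solution_deriv[OF assms] simp: power2_eq_square algebra_simps)
  then show ?thesis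
    by (simp only: lyapunov_identity)
qed

lemma V_antimono:
  assumes sol: "is_solution f x" and "x 0 \<in> domD" and "0 \<le> s" "s \<le> t"
  shows "V (fst (x t)) (snd (snd (x t))) \<le> V (fst (x s)) (snd (snd (x s)))"
proof (rule halfline_antimono[OF V_deriv[OF sol]])
  show "- 2 * W (fst (x r)) (snd (snd (x r))) \<le> 0" if "s \<le> r" for r
    using W_nonneg solution_E_F_nonneg[OF sol \<open>x 0 \<in> domD\<close>, of r] that \<open>0 \<le> s\<close> by simp
qed (use assms in auto)

lemma close_if_V_small:
  assumes "V E F < min (\<eta>\<^sup>2) (lam * \<eta>\<^sup>2)" "0 < \<eta>"
  shows "\<bar>E - Es\<bar> < \<eta>" "\<bar>F - Fs\<bar> < \<eta>"
proof -
  have "(E - Es)\<^sup>2 < \<eta>\<^sup>2" "lam * (F - Fs)\<^sup>2 < lam * \<eta>\<^sup>2"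
    using assms V_lower_bounds[where E = E and F = F] by auto
  then have "(E - Es)\<^sup>2 < \<eta>\<^sup>2" "(F - Fs)\<^sup>2 < \<eta>\<^sup>2"
    using lam_pos by simp_all
  then show "\<bar>E - Es\<bar> < \<eta>" "\<bar>F - Fs\<bar> < \<eta>"
    using power2_less_imp_less[of "\<bar>E - Es\<bar>" \<eta>] power2_less_imp_less[of "\<bar>F - Fs\<bar>" \<eta>] \<open>0 < \<eta>\<close>
    by simp_all
qed

lemma V_small_near_xs:
  assumes "0 < v"
  obtains d where "0 < d" "\<And>z. dist z xs < d \<Longrightarrow> V (fst z) (snd (snd z)) < v"
proof -
  have "continuous (at xs) (\<lambda>z. V (fst z) (snd (snd z)))"
    unfolding V_def by (intro continuous_intros)
  moreover have "V (fst xs) (snd (snd xs)) = 0"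
    by (simp add: V_def xs_def)
  ultimately obtain d where "0 < d" "\<And>z. dist z xs < d \<Longrightarrow> V (fst z) (snd (snd z)) < v"
    using assms V_nonneg unfolding continuous_at_eps_delta dist_real_def by fastforce
  then show thesis
    by (rule that)
qed

lemma solution_M_deviation_le:
  assumes sol: "is_solution f x" and E: "\<And>s. 0 \<le> s \<Longrightarrow> \<bar>fst (x s) - Es\<bar> \<le> \<eta>"
    and "\<bar>fst (snd (x 0)) - Ms\<bar> \<le> B" "bM * \<eta> \<le> \<delta>M * B" "0 \<le> t"
  shows "\<bar>fst (snd (x t)) - Ms\<bar> \<le> B"
proof (rule linear_relaxation_bound[OF solution_deriv(2)[OF sol]])
  show "\<bar>bM * fst (x s) - \<delta>M * Ms\<bar> \<le> \<delta>M * B" if "0 \<le> s" for s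
  proof -
    have "\<bar>bM * fst (x s) - \<delta>M * Ms\<bar> = bM * \<bar>fst (x s) - Es\<bar>"
      using Ms_eq rates_pos by (simp add: abs_mult flip: right_diff_distrib)
    also have "\<dots> \<le> bM * \<eta>"
      using E[OF that] rates_pos by simp
    finally show ?thesis
      using assms(4) by linarith
  qed
qed (use assms pos in auto)

lemma stable_xs: "stable_in f domD xs"
  unfolding stable_in_def
proof (intro allI impI)
  fix \<epsilon> :: real assume "0 < \<epsilon>"
  define \<rho> where "\<rho> = 1 + bM / \<delta>M"
  define \<eta> where "\<eta> = \<epsilon> / (3 * \<rho>)"
  have "1 \<le> \<rho>"
    using pos rates_pos by (simp add: \<rho>_def)
  then have "0 < \<eta>" "\<eta> \<le> \<epsilon> / 3" "\<eta> * \<rho> = \<epsilon> / 3"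
    using \<open>0 < \<epsilon>\<close> divide_left_mono[of 3 "3 * \<rho>" \<epsilon>] by (simp_all add: \<eta>_def)
  define v where "v = min (\<eta>\<^sup>2) (lam * \<eta>\<^sup>2)"
  have "0 < v"
    using \<open>0 < \<eta>\<close> lam_pos by (simp add: v_def)
  then obtain d where "0 < d" and d: "\<And>z. dist z xs < d \<Longrightarrow> V (fst z) (snd (snd z)) < v"
    using V_small_near_xs by blast
  show "\<exists>\<delta>>0. \<forall>x. is_solution f x \<and> x 0 \<in> domD \<and> dist (x 0) xs < \<delta> \<longrightarrow> (\<forall>t>0. dist (x t) xs < \<epsilon>)"
  proof (intro exI[of _ "min d \<eta>"] conjI allI impI)
    fix x and t :: real
    assume "is_solution f x \<and> x 0 \<in> domD \<and> dist (x 0) xs < min d \<eta>" "0 < t"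
    then have sol: "is_solution f x" and "x 0 \<in> domD" and x0: "dist (x 0) xs < min d \<eta>"
      by auto
    have V: "V (fst (x s)) (snd (snd (x s))) < v" if "0 \<le> s" for s
      using V_antimono[OF sol \<open>x 0 \<in> domD\<close> order_refl that] d x0 by fastforce
    have E: "\<bar>fst (x s) - Es\<bar> < \<eta>" and F: "\<bar>snd (snd (x s)) - Fs\<bar> < \<eta>" if "0 \<le> s" for s
      using close_if_V_small[OF V[OF that, unfolded v_def] \<open>0 < \<eta>\<close>] by simp_all
    have "\<bar>fst (snd (x t)) - Ms\<bar> \<le> \<eta> * \<rho>"
    proof (rule solution_M_deviation_le[OF sol])
      show "\<bar>fst (x s) - Es\<bar> \<le> \<eta>" if "0 \<le> s" for s
        using E[OF that] by simp
      show "bM * \<eta> \<le> \<delta>M * (\<eta> * \<rho>)"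
        using pos \<open>0 < \<eta>\<close> by (simp add: \<rho>_def field_simps)
      show "\<bar>fst (snd (x 0)) - Ms\<bar> \<le> \<eta> * \<rho>"
      proof -
        have "\<bar>fst (snd (x 0)) - Ms\<bar> < \<eta>"
          using dist_fst_snd_le[of "x 0" xs] x0 by (simp add: xs_def dist_real_def)
        moreover have "\<eta> \<le> \<eta> * \<rho>"
          using \<open>1 \<le> \<rho>\<close> \<open>0 < \<eta>\<close> by simp
        ultimately show ?thesis
          by linarith
      qed
    qed (use \<open>0 < t\<close> in simp)
    then show "dist (x t) xs < \<epsilon>"
      using dist_state_le[of "x t" xs] E[of t] F[of t] \<open>0 < t\<close> \<open>\<eta> \<le> \<epsilon> / 3\<close> \<open>\<eta> * \<rho> = \<epsilon> / 3\<close>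
      by (simp add: xs_def)
  qed (use \<open>0 < d\<close> \<open>0 < \<eta>\<close> in simp)
qed

lemma W_pos:
  assumes "0 \<le> F" "0 < V E F" "0 < E + sl * F"
  shows "0 < W E F"
proof (rule ccontr)
  assume "\<not> 0 < W E F"
  moreover have "0 \<le> cE * ((E - Es) - kk * (F - Fs))\<^sup>2" "0 \<le> \<beta>E / K * F * (E - Es)\<^sup>2"
    using assms pos rates_pos by simp_all
  ultimately have square: "cE * ((E - Es) - kk * (F - Fs))\<^sup>2 = 0"
    and cubic: "\<beta>E / K * F * (E - Es)\<^sup>2 = 0"
    unfolding W_def by linarith+
  have "(E - Es) - kk * (F - Fs) = 0"
    using square rates_pos by simp
  moreover have "F = 0 \<or> E = Es"
    using cubic pos by simp
  moreover have "kk * Fs = Es"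
    using Fs_eq pos rates_pos by (simp add: kk_def field_simps)
  ultimately show False
    using assms pos rates_pos by (auto simp: V_def kk_def)
qed

lemma W_bounded_below:
  assumes "0 < v" "0 < B"
  obtains w where "0 < w"
    "\<And>E F. 0 \<le> F \<Longrightarrow> B \<le> E + sl * F \<Longrightarrow> v \<le> V E F \<Longrightarrow> V E F \<le> V0 \<Longrightarrow> w \<le> W E F"
proof -
  define S where "S = {z. 0 \<le> snd z \<and> B \<le> fst z + sl * snd z \<and> v \<le> V (fst z) (snd z) \<and> V (fst z) (snd z) \<le> V0}"
  have "closed S"
    unfolding S_def V_def by (intro closed_Collect_conj closed_Collect_le continuous_intros)
  moreover have "S \<subseteq> cball (Es, Fs) (sqrt (V0 + V0 / lam))"
  proof
    fix z assume "z \<in> S"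
    then have "(fst z - Es)\<^sup>2 \<le> V0" "lam * (snd z - Fs)\<^sup>2 \<le> V0"
      using V_lower_bounds[where E = "fst z" and F = "snd z"] by (auto simp: S_def)
    then have "(fst z - Es)\<^sup>2 + (snd z - Fs)\<^sup>2 \<le> V0 + V0 / lam"
      using lam_pos by (simp add: pos_le_divide_eq mult.commute add_mono)
    then show "z \<in> cball (Es, Fs) (sqrt (V0 + V0 / lam))"
      by (cases z) (simp add: dist_Pair_Pair dist_real_def real_sqrt_le_mono dist_commute)
  qed
  ultimately have "compact S"
    using bounded_subset[OF bounded_cball] compact_eq_bounded_closed by blast
  show thesis
  proof (cases "S = {}")
    case True
    then show thesis
      using that[of 1] by (auto simp: S_def)
  next
    case False
    have "continuous_on S (\<lambda>z. W (fst z) (snd z))"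
      unfolding W_def by (intro continuous_intros)
    then obtain zm where "zm \<in> S" and zm: "\<And>z. z \<in> S \<Longrightarrow> W (fst zm) (snd zm) \<le> W (fst z) (snd z)"
      using continuous_attains_inf[OF \<open>compact S\<close> False] by blast
    moreover have "0 < W (fst zm) (snd zm)"
      using \<open>zm \<in> S\<close> assms by (intro W_pos[where sl = sl]) (auto simp: S_def)
    ultimately show thesis
      by (intro that[of "W (fst zm) (snd zm)"]) (auto simp: S_def)
  qed
qed

lemma weighted_sum_rates:
  obtains sl \<mu> where "0 < sl" "0 < \<mu>" "\<mu> \<le> bF * sl - cE" "\<mu> * sl \<le> \<beta>E - \<delta>F * sl"
proof -
  \<comment> \<open>Any \<open>sl\<close> strictly between \<open>cE / bF\<close> and \<open>\<beta>E / \<delta>F\<close> works; this interval is nonempty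
    because \<open>R0 > 1\<close>.\<close>
  have "cE / bF < \<beta>E / \<delta>F"
    using R0_gt_1_rates pos rates_pos by (simp add: field_simps)
  then obtain sl where sl_bounds: "cE / bF < sl" "sl < \<beta>E / \<delta>F"
    using dense by blast
  have "0 < cE / bF"
    using rates_pos by simp
  then have "0 < sl"
    using sl_bounds by linarith
  then have sl: "0 < sl" "0 < bF * sl - cE" "0 < \<beta>E - \<delta>F * sl"
    using sl_bounds pos rates_pos by (simp_all add: field_simps)
  show thesis
    using sl by (intro that[of sl "min (bF * sl - cE) ((\<beta>E - \<delta>F * sl) / sl)"])
      (auto simp: min_def field_simps)
qed

lemma weighted_sum_deriv_nonneg:
  assumes "0 < sl" "0 < \<mu>" "\<mu> \<le> bF * sl - cE" "\<mu> * sl \<le> \<beta>E - \<delta>F * sl"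
    and "0 \<le> E" "0 \<le> F" "E \<le> \<mu> * K * sl / (2 * \<beta>E)"
  shows "0 \<le> (\<beta>E * F * (1 - E / K) - cE * E) + sl * (bF * E - \<delta>F * F)"
proof -
  have "\<beta>E / K * (F * E) \<le> \<beta>E / K * (F * (\<mu> * K * sl / (2 * \<beta>E)))"
    using assms pos by (intro mult_left_mono) auto
  also have "\<dots> = \<mu> * sl * F / 2"
    using pos by (simp add: field_simps)
  finally have bound: "\<beta>E / K * (F * E) \<le> \<mu> * sl * F / 2" .
  have "0 \<le> \<mu> * E + \<mu> * sl * F - \<mu> * sl * F / 2"
    using assms by simp
  also have "\<dots> \<le> (bF * sl - cE) * E + (\<beta>E - \<delta>F * sl) * F - \<beta>E / K * (F * E)"
    using assms by (intro diff_mono add_mono mult_right_mono bound) simp_all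
  also have "\<dots> = (\<beta>E * F * (1 - E / K) - cE * E) + sl * (bF * E - \<delta>F * F)"
    by (simp add: algebra_simps)
  finally show ?thesis .
qed

lemma solution_bounded_away_from_origin:
  assumes sol: "is_solution f x" and "x 0 \<in> domD"
    and nz: "(fst (x 0), snd (snd (x 0))) \<noteq> (0, 0)"
  obtains sl B where "0 < B" "\<And>t. 0 \<le> t \<Longrightarrow> B \<le> fst (x t) + sl * snd (snd (x t))"
proof -
  define E F where "E t = fst (x t)" and "F t = snd (snd (x t))" for t
  have EF: "0 \<le> E t" "0 \<le> F t" if "0 \<le> t" for t
    using solution_E_F_nonneg[OF sol \<open>x 0 \<in> domD\<close> that] by (simp_all add: E_def F_def)
  obtain sl \<mu> where sl: "0 < sl" "0 < \<mu>" "\<mu> \<le> bF * sl - cE" "\<mu> * sl \<le> \<beta>E - \<delta>F * sl"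
    by (rule weighted_sum_rates)
  define \<delta>0 where "\<delta>0 = \<mu> * K * sl / (2 * \<beta>E)"
  have "0 < \<delta>0"
    using sl pos by (simp add: \<delta>0_def)
  have "0 < E 0 + sl * F 0"
    using nz EF[of 0] sl by (auto simp: E_def F_def add_pos_nonneg add_nonneg_pos)
  define B where "B = min (E 0 + sl * F 0) \<delta>0"
  have "B \<le> E t + sl * F t" if "0 \<le> t" for t
  proof (rule halfline_barrier_lower[OF _ order_refl _ _ that])
    show "((\<lambda>t. E t + sl * F t) has_real_derivative
        (\<beta>E * F t * (1 - E t / K) - cE * E t) + sl * (bF * E t - \<delta>F * F t)) (at t within {0..})"
      if "0 \<le> t" for t
      unfolding E_def F_def by (intro DERIV_add DERIV_cmult solution_deriv[OF sol that])
    show "0 \<le> (\<beta>E * F s * (1 - E s / K) - cE * E s) + sl * (bF * E s - \<delta>F * F s)"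
      if "0 \<le> s" "E s + sl * F s < B" for s
    proof (rule weighted_sum_deriv_nonneg[OF sl EF[OF that(1)]])
      have "0 \<le> sl * F s"
        using sl EF[OF that(1)] by simp
      then show "E s \<le> \<mu> * K * sl / (2 * \<beta>E)"
        using that(2) min.cobounded2[of "E 0 + sl * F 0" \<delta>0] unfolding B_def \<delta>0_def by linarith
    qed
  qed (simp add: B_def)
  moreover have "0 < B"
    using \<open>0 < \<delta>0\<close> \<open>0 < E 0 + sl * F 0\<close> by (simp add: B_def)
  ultimately show thesis
    by (intro that[where sl = sl and B = B]) (simp_all add: E_def F_def)
qed

lemma V_eventually_less:
  assumes sol: "is_solution f x" and "x 0 \<in> domD"
    and nz: "(fst (x 0), snd (snd (x 0))) \<noteq> (0, 0)" and "0 < v"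
  shows "\<forall>\<^sub>F t in at_top. V (fst (x t)) (snd (snd (x t))) < v"
proof (rule ccontr)
  define Vx where "Vx t = V (fst (x t)) (snd (snd (x t)))" for t
  assume "\<not> ?thesis"
  then have big: "v \<le> Vx t" if "0 \<le> t" for t
    using V_antimono[OF sol \<open>x 0 \<in> domD\<close> that] that
    unfolding eventually_at_top_linorder Vx_def by (meson leI le_less_trans)
  obtain sl B where "0 < B" and B: "\<And>t. 0 \<le> t \<Longrightarrow> B \<le> fst (x t) + sl * snd (snd (x t))"
    using solution_bounded_away_from_origin[OF assms(1-3)] by blast
  obtain w where "0 < w" and w: "\<And>E F. 0 \<le> F \<Longrightarrow> B \<le> E + sl * F \<Longrightarrow> v \<le> V E F \<Longrightarrow>
      V E F \<le> Vx 0 \<Longrightarrow> w \<le> W E F"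
    using W_bounded_below[OF \<open>0 < v\<close> \<open>0 < B\<close>] by blast
  have W: "w \<le> W (fst (x t)) (snd (snd (x t)))" if "0 \<le> t" for t
    using w solution_E_F_nonneg[OF sol \<open>x 0 \<in> domD\<close> that] B[OF that] big[OF that]
      V_antimono[OF sol \<open>x 0 \<in> domD\<close> order_refl that]
    by (simp add: Vx_def)
  have "((\<lambda>t. Vx t + 2 * w * t) has_real_derivative
      - 2 * W (fst (x t)) (snd (snd (x t))) + 2 * w) (at t within {0..})" if "0 \<le> t" for t
    using V_deriv[OF sol that] unfolding Vx_def[symmetric]
    by (auto intro!: derivative_eq_intros)
  then have decay: "Vx t + 2 * w * t \<le> Vx 0 + 2 * w * 0" if "0 \<le> t" for t
    by (rule halfline_antimono[OF _ _ order_refl that]) (use W in auto)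
  have "0 \<le> Vx 0" "0 \<le> Vx (Vx 0 / w + 1)"
    by (simp_all add: Vx_def V_nonneg)
  moreover have "Vx (Vx 0 / w + 1) + 2 * w * (Vx 0 / w + 1) \<le> Vx 0 + 2 * w * 0"
    using \<open>0 \<le> Vx 0\<close> \<open>0 < w\<close> by (intro decay) simp
  moreover have "2 * w * (Vx 0 / w + 1) = 2 * Vx 0 + 2 * w"
    using \<open>0 < w\<close> by (simp add: field_simps)
  ultimately show False
    using \<open>0 < w\<close> by linarith
qed

lemma solution_tendsto_xs:
  assumes sol: "is_solution f x" and "x 0 \<in> domD"
    and nz: "(fst (x 0), snd (snd (x 0))) \<noteq> (0, 0)"
  shows "(x \<longlongrightarrow> xs) at_top"
proof -
  have close: "\<forall>\<^sub>F t in at_top. \<bar>fst (x t) - Es\<bar> < \<eta> \<and> \<bar>snd (snd (x t)) - Fs\<bar> < \<eta>"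
    if "0 < \<eta>" for \<eta>
  proof -
    have "\<forall>\<^sub>F t in at_top. V (fst (x t)) (snd (snd (x t))) < min (\<eta>\<^sup>2) (lam * \<eta>\<^sup>2)"
      using lam_pos that by (intro V_eventually_less[OF assms]) simp
    then show ?thesis
      by (rule eventually_mono) (use close_if_V_small[OF _ that] in blast)
  qed
  have E: "((\<lambda>t. fst (x t)) \<longlongrightarrow> Es) at_top"
    unfolding tendsto_iff dist_real_def by (intro allI impI, rule eventually_mono[OF close]) auto
  have F: "((\<lambda>t. snd (snd (x t))) \<longlongrightarrow> Fs) at_top"
    unfolding tendsto_iff dist_real_def by (intro allI impI, rule eventually_mono[OF close]) auto
  have "((\<lambda>t. bM * fst (x t)) \<longlongrightarrow> \<delta>M * Ms) at_top"
    using tendsto_mult[OF tendsto_const E, of bM] Ms_eq by simp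
  then have "((\<lambda>t. fst (snd (x t))) \<longlongrightarrow> Ms) at_top"
    using linear_relaxation_tendsto[OF solution_deriv(2)[OF sol]] pos by blast
  then show ?thesis
    unfolding xs_def using tendsto_stateI[OF E _ F] by blast
qed

lemma solution_tendsto_xs_iff:
  assumes sol: "is_solution f x" and "x 0 \<in> domD"
  shows "(x \<longlongrightarrow> xs) at_top \<longleftrightarrow> (fst (x 0), snd (snd (x 0))) \<noteq> (0, 0)"
proof
  assume "(x \<longlongrightarrow> xs) at_top"
  then show "(fst (x 0), snd (snd (x 0))) \<noteq> (0, 0)"
    using solution_M_axis_tendsto_0[OF assms] tendsto_unique[OF trivial_limit_at_top_linorder] xs_neq_0
    by auto
qed (rule solution_tendsto_xs[OF assms])

lemma unstable_0: "\<not> stable_in f domD 0"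
proof
  assume "stable_in f domD 0"
  moreover have "0 < Es / 2"
    using Es_pos by simp
  ultimately obtain \<delta> where "0 < \<delta>" and \<delta>: "\<And>x. is_solution f x \<and> x 0 \<in> domD \<and> dist (x 0) 0 < \<delta> \<Longrightarrow>
      \<forall>t>0. dist (x t) 0 < Es / 2"
    unfolding stable_in_def by blast
  \<comment> \<open>The solution from \<open>(\<delta> / 2, 0, 0)\<close> converges to \<open>xs\<close>, which is at distance at least \<open>Es\<close> from 0.\<close>
  have "(\<delta> / 2, 0, 0) \<in> domD"
    using \<open>0 < \<delta>\<close> by (simp add: mem_domD)
  then obtain x where sol: "is_solution f x" and x0: "x 0 = (\<delta> / 2, 0, 0)"
    by (rule solution_exists)
  have "dist (x 0) 0 < \<delta>"
    using \<open>0 < \<delta>\<close> by (simp add: x0 zero_prod_def dist_Pair_Pair)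
  then have small: "dist (x t) 0 < Es / 2" if "0 < t" for t
    using \<delta>[of x] sol \<open>(\<delta> / 2, 0, 0) \<in> domD\<close> x0 that by auto
  have "((\<lambda>t. dist (x t) 0) \<longlongrightarrow> dist xs 0) at_top"
    using solution_tendsto_xs[OF sol] x0 \<open>0 < \<delta>\<close> \<open>(\<delta> / 2, 0, 0) \<in> domD\<close>
    by (intro tendsto_dist tendsto_const) auto
  moreover have "Es \<le> dist xs 0"
    using dist_fst_le[of xs 0] Es_pos by (simp add: xs_def)
  ultimately have "\<forall>\<^sub>F t in at_top. Es / 2 < dist (x t) 0"
    using Es_pos by (intro order_tendstoD) auto
  then obtain T where "\<And>t. T \<le> t \<Longrightarrow> Es / 2 < dist (x t) 0"
    unfolding eventually_at_top_linorder by blast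
  then have "Es / 2 < dist (x (max T 1)) 0"
    by simp
  with small[of "max T 1"] show False
    by (simp add: less_max_iff_disj)
qed

end

theorem theorem1:
  fixes \<beta>E \<nu>E \<delta>E \<delta>M \<delta>F K \<nu> :: real
  assumes "\<beta>E > 0" "\<nu>E > 0" "\<delta>E > 0" "\<delta>M > 0" "\<delta>F > 0" "K > 0"
    and "0 < \<nu>" "\<nu> < 1"
    and R0gt: "R0 \<beta>E \<nu>E \<delta>E \<delta>F \<nu> > 1"
  defines "f \<equiv> mosq_vf \<beta>E \<nu>E \<delta>E \<delta>M \<delta>F K \<nu>"
    and "Es \<equiv> K * (1 - 1 / R0 \<beta>E \<nu>E \<delta>E \<delta>F \<nu>)"
  defines "xs \<equiv> (Es, (1 - \<nu>) * \<nu>E / \<delta>M * Es, \<nu> * \<nu>E / \<delta>F * Es)"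
  shows "{x. is_equilibrium f domD x} = {0, xs} \<and> xs \<noteq> 0
    \<and> stable_in f domD xs
    \<and> (\<forall>x. is_solution f x \<and> x 0 \<in> domD \<longrightarrow>
          ((x \<longlongrightarrow> xs) at_top \<longleftrightarrow> (fst (x 0), snd (snd (x 0))) \<noteq> (0, 0)))
    \<and> \<not> stable_in f domD 0
    \<and> (\<forall>x. is_solution f x \<and> x 0 \<in> domD \<and> fst (x 0) = 0 \<and> snd (snd (x 0)) = 0
          \<longrightarrow> (x \<longlongrightarrow> 0) at_top)"
proof -
  interpret m: mosquito_endemic \<beta>E \<nu>E \<delta>E \<delta>M \<delta>F K \<nu>
    by unfold_locales (use assms(1-9) in auto)
  have xs: "xs = m.xs"
    by (simp add: xs_def Es_def m.xs_def m.Es_def m.Ms_def m.Fs_def m.bM_def m.bF_def)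
  show ?thesis
    unfolding f_def xs
    using m.equilibria m.xs_neq_0 m.stable_xs m.solution_tendsto_xs_iff m.unstable_0
      m.solution_M_axis_tendsto_0
    by blast
qed

end
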